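(* Let $\Lambda$ be a full-rank lattice in $\mathbb{R}^n$, let $B>0$, and let $H$ be a $k$-dimensional linear subspace of $\mathbb{R}^n$ with $1\le k<n$. Then \[ \bigl|\Lambda\cap H\cap[0,B)^n\bigr| \le \frac{n^{k/2}\,(B+2\nu(\Lambda))^k\,(2\nu(\Lambda))^{n-k}}{\det\Lambda}. \]
   Context: $\nu(\Lambda)=\sup_{x\in\mathbb{R}^n}\min_{\lambda\in\Lambda}\|x-\lambda\|_2$ is the covering radius of $\Lambda$, and $\det\Lambda$ is the determinant (covolume) of $\Lambda$. The paper calls $H$ a "$k$-dimensional hyperplane"; it is a $k$-dimensional subspace through the origin. *)

theory Defs
  imports "HOL-Analysis.Analysis"
begin

definition lattice_of :: "real^'n^'n \<Rightarrow> (real^'n) set" where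
  "lattice_of M = {M *v z | z. \<forall>i. z $ i \<in> \<int>}"

definition full_rank_lattice :: "(real^'n) set \<Rightarrow> bool" where
  "full_rank_lattice L \<longleftrightarrow> (\<exists>M. invertible M \<and> L = lattice_of M)"

text \<open>Determinant (covolume) of a full-rank lattice: |det| of any basis matrix
  (independent of the chosen basis).\<close>
definition lattice_det :: "(real^'n) set \<Rightarrow> real" where
  "lattice_det L = \<bar>det (SOME M. invertible M \<and> L = lattice_of M)\<bar>"

definition covering_radius :: "(real^'n) set \<Rightarrow> real" where
  "covering_radius L = (SUP x. INF l\<in>L. norm (x - l))"

end

theory Submission
  imports Defs
begin

text \<open>Fix \<open>r > \<nu>(\<Lambda>)\<close> and let \<open>U\<close> be the closed \<open>r\<close>-neighbourhood of
  \<open>A = \<Lambda> \<inter> H \<inter> [0,B)\<^sup>n\<close>. Since every point lies within \<open>r\<close> of the lattice, every point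
  \<open>y\<close> of the half-open fundamental cell \<open>F\<close> of a basis has at least \<open>|A|\<close> lattice
  translates \<open>y + l\<close> in \<open>U\<close>; the sets \<open>U \<inter> (l + F)\<close> being disjoint, integration over \<open>F\<close>
  gives \<open>|A| det \<Lambda> \<le> vol U\<close>. In an orthonormal frame whose first \<open>k\<close> vectors span \<open>H\<close>,
  \<open>U\<close> lies in a box with \<open>k\<close> sides of length at most \<open>\<surd>n B + 2r\<close> and \<open>n - k\<close> sides of
  length \<open>2r\<close>. Letting \<open>r\<close> decrease to \<open>\<nu>(\<Lambda>)\<close> gives the bound.\<close>

lemma swap_coordinates_image_cbox:
  fixes a b :: "real^'n"
  shows "(\<lambda>x. \<chi> i. x $ Transposition.transpose m n i) ` cbox a b
       = cbox (\<chi> i. a $ Transposition.transpose m n i) (\<chi> i. b $ Transposition.transpose m n i)"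
  by (auto simp: image_iff lambda_swap_Galois mem_box_cart) (metis transpose_involutory)+

lemma measure_swap_coordinates_image_cbox:
  fixes a b :: "real^'n"
  shows "measure lebesgue ((\<lambda>x. \<chi> i. x $ Transposition.transpose m n i) ` cbox a b)
       = measure lebesgue (cbox a b)"
proof (cases "cbox a b = {}")
  case False
  then have "cbox (\<chi> i. a $ Transposition.transpose m n i) (\<chi> i. b $ Transposition.transpose m n i) \<noteq> {}"
    by (metis image_is_empty swap_coordinates_image_cbox)
  then show ?thesis
    using False prod.permute [OF permutes_swap_id, where S=UNIV and g="\<lambda>i. (b - a)$i", symmetric]
    by (simp add: swap_coordinates_image_cbox content_cbox_cart)
qed simp

lemma measure_shear_image_cbox:
  fixes a b :: "real^'n"
  assumes "m \<noteq> n"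
  shows "measure lebesgue ((\<lambda>x. \<chi> i. if i = m then x$m + x$n else x$i) ` cbox a b)
       = measure lebesgue (cbox a b)"
proof (cases "cbox a b = {}")
  case False
  define h :: "real^'n \<Rightarrow> real^'n" where "h x = (\<chi> i. if i = m then x$m + x$n else x$i)" for x
  define v :: "real^'n" where "v = (\<chi> i. if i = n then - a $ n else 0)"
  have "linear h"
    unfolding h_def by (rule linearI) (auto simp: vec_eq_iff algebra_simps)
  then have "h ` cbox a b = (\<lambda>y. y - h v) ` h ` (+) v ` cbox a b"
    by (simp add: image_image linear_add)
  also have "(+) v ` cbox a b = cbox (a + v) (b + v)"
    using cbox_translation[of v a b] by (simp add: add.commute)
  finally have "h ` cbox a b = (\<lambda>y. y - h v) ` h ` cbox (a + v) (b + v)" .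
  then have "measure lebesgue (h ` cbox a b) = measure lebesgue (h ` cbox (a + v) (b + v))"
    by (simp add: measure_translation_subtract)
  also have "\<dots> = measure lebesgue (cbox (a + v) (b + v))"
    unfolding h_def using False assms by (intro measure_shear_interval) (auto simp: v_def interval_ne_empty_cart)
  also have "\<dots> = measure lebesgue (cbox a b)"
    by (metis cbox_translation add.commute measure_translation)
  finally show ?thesis
    by (simp add: h_def)
qed simp

lemma abs_det_matrix_swap_coordinates:
  "\<bar>det (matrix (\<lambda>x::real^'n. \<chi> i. x $ Transposition.transpose m n i))\<bar> = 1"
proof -
  have "(\<chi> i j. if Transposition.transpose m n i = j then 1 else 0)
      = (\<chi> i j. if j = Transposition.transpose m n i then 1 else (0::real))"
    by (auto intro!: Cart_lambda_cong)
  then have "matrix (\<lambda>x::real^'n. \<chi> i. x $ Transposition.transpose m n i)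
      = transpose (\<chi> i j. mat 1 $ i $ Transposition.transpose m n j)"
    by (auto simp: matrix_eq transpose_def axis_def mat_def matrix_def)
  then show ?thesis
    by (simp add: det_permute_columns permutes_swap_id sign_swap_id abs_mult)
qed

lemma det_matrix_shear:
  assumes "m \<noteq> n"
  shows "det (matrix (\<lambda>x::real^'n. \<chi> i. if i = m then x$m + x$n else x$i)) = 1"
proof -
  have "matrix (\<lambda>x::real^'n. \<chi> i. if i = m then x$m + x$n else x$i)
      = (\<chi> k. if k = m then row m (mat 1) + 1 *s row n (mat 1) else row k (mat 1))"
    by (auto simp: matrix_def vec_eq_iff axis_def row_def mat_def)
  then show ?thesis
    using det_row_operation [OF assms, of "mat 1" 1] by simp
qed

lemma measure_singular_linear_image:
  fixes f :: "real^'n \<Rightarrow> real^'n"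
  assumes "linear f" "\<not> inj f"
  shows "f ` S \<in> lmeasurable" "measure lebesgue (f ` S) = 0"
  using assms negligible_linear_singular_image negligible_imp_measure0
    lmeasurable_iff_indicator_has_integral negligible_UNIV by blast+

lemma measure_linear_image_volume_preserving:
  assumes "linear f" "\<bar>det (matrix f)\<bar> = 1"
    and "\<And>a b. measure lebesgue (f ` cbox a b) = measure lebesgue (cbox a b)"
    and "S \<in> lmeasurable"
  shows "f ` S \<in> lmeasurable \<and> measure lebesgue (f ` S) = \<bar>det (matrix f)\<bar> * measure lebesgue S"
  using measure_linear_sufficient [OF assms(1,4), of 1] assms(2,3) by simp

text \<open>\<open>measure_linear_image\<close> in \<open>Change_Of_Vars\<close> is stated only for index types of
  class \<open>wellorder\<close>; the same elementary-matrix induction works for any finite index type.\<close>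

lemma lmeasurable_measure_linear_image:
  fixes f :: "real^'n \<Rightarrow> real^'n"
  assumes "linear f" "S \<in> lmeasurable"
  shows "f ` S \<in> lmeasurable \<and> measure lebesgue (f ` S) = \<bar>det (matrix f)\<bar> * measure lebesgue S"
proof -
  let ?P = "\<lambda>f::real^'n \<Rightarrow> real^'n. \<forall>S \<in> lmeasurable.
      f ` S \<in> lmeasurable \<and> measure lebesgue (f ` S) = \<bar>det (matrix f)\<bar> * measure lebesgue S"
  have "?P f"
  proof (rule induct_linear_elementary [OF \<open>linear f\<close>])
    fix f g :: "real^'n \<Rightarrow> real^'n"
    assume "linear f" "linear g" "?P f" "?P g"
    show "?P (f \<circ> g)"
    proof
      fix S :: "(real^'n) set"
      assume "S \<in> lmeasurable"
      with \<open>?P g\<close> have "g ` S \<in> lmeasurable"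
        by blast
      then show "(f \<circ> g) ` S \<in> lmeasurable \<and>
          measure lebesgue ((f \<circ> g) ` S) = \<bar>det (matrix (f \<circ> g))\<bar> * measure lebesgue S"
        using \<open>?P f\<close> \<open>?P g\<close> \<open>S \<in> lmeasurable\<close>
        unfolding image_comp [symmetric] matrix_compose [OF \<open>linear g\<close> \<open>linear f\<close>]
        by (simp add: det_mul abs_mult)
    qed
  next
    fix f :: "real^'n \<Rightarrow> real^'n" and i
    assume f: "linear f" "\<And>x. f x $ i = 0"
    then have "\<not> inj f"
      by (metis linear_injective_imp_surjective one_neq_zero surjE vec_component)
    then show "?P f"
      using f det_nz_iff_inj measure_singular_linear_image by fastforce
  next
    fix c :: "'n \<Rightarrow> real"
    show "?P (\<lambda>x. \<chi> i. c i * x $ i)"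
      by (simp add: measurable_stretch measure_stretch axis_def matrix_def det_diagonal)
  next
    fix m n :: 'n
    let ?h = "\<lambda>x::real^'n. \<chi> i. x $ Transposition.transpose m n i"
    have "linear ?h"
      by (rule linearI) (simp_all add: vec_eq_iff)
    then show "?P ?h"
      using measure_linear_image_volume_preserving abs_det_matrix_swap_coordinates
        measure_swap_coordinates_image_cbox by blast
  next
    fix m n :: 'n
    assume "m \<noteq> n"
    let ?h = "\<lambda>x::real^'n. \<chi> i. if i = m then x$m + x$n else x$i"
    have "linear ?h"
      by (rule linearI) (auto simp: vec_eq_iff algebra_simps)
    moreover have "\<bar>det (matrix ?h)\<bar> = 1"
      using det_matrix_shear [OF \<open>m \<noteq> n\<close>] by simp
    ultimately show "?P ?h"
      using measure_linear_image_volume_preserving measure_shear_image_cbox [OF \<open>m \<noteq> n\<close>] by blast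
  qed
  with assms show ?thesis
    by blast
qed

corollary
  fixes M :: "real^'n^'n"
  assumes "S \<in> lmeasurable"
  shows lmeasurable_matrix_image: "(*v) M ` S \<in> lmeasurable"
    and measure_matrix_image: "measure lebesgue ((*v) M ` S) = \<bar>det M\<bar> * measure lebesgue S"
  using lmeasurable_measure_linear_image [of "(*v) M", OF _ assms]
  by (simp_all add: matrix_of_matrix_vector_mul)

lemma measure_orthogonal_matrix_image:
  fixes R :: "real^'n^'n"
  assumes "orthogonal_matrix R" "S \<in> lmeasurable"
  shows "measure lebesgue ((*v) R ` S) = measure lebesgue S"
  using measure_matrix_image [OF assms(2), of R] det_orthogonal_matrix [OF assms(1)] by auto

lemma measure_cbox_centred:
  fixes c w :: "real^'n"
  assumes "\<And>i. 0 \<le> w $ i"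
  shows "measure lebesgue (cbox (c - w) (c + w)) = (\<Prod>i\<in>UNIV. 2 * w $ i)"
proof -
  have "cbox (c - w) (c + w) \<noteq> {}"
    using assms by (simp add: interval_ne_empty_cart)
  then show ?thesis
    by (simp add: content_cbox_cart)
qed

lemma lattice_of_diff:
  assumes "x \<in> lattice_of M" "y \<in> lattice_of M"
  shows "x - y \<in> lattice_of M"
proof -
  obtain z z' where "x = M *v z" "y = M *v z'" "\<forall>i. z $ i \<in> \<int>" "\<forall>i. z' $ i \<in> \<int>"
    using assms by (auto simp: lattice_of_def)
  then have "x - y = M *v (z - z')" "\<forall>i. (z - z') $ i \<in> \<int>"
    by (auto simp: matrix_vector_mult_diff_distrib)
  then show ?thesis
    by (auto simp: lattice_of_def)
qed

lemma full_rank_lattice_basis: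
  assumes "full_rank_lattice L"
  obtains M where "invertible M" "L = lattice_of M" "lattice_det L = \<bar>det M\<bar>"
proof -
  define M where "M = (SOME M. invertible M \<and> L = lattice_of M)"
  have "invertible M \<and> L = lattice_of M"
    using assms unfolding full_rank_lattice_def M_def by (rule someI_ex)
  moreover have "lattice_det L = \<bar>det M\<bar>"
    by (simp add: lattice_det_def M_def)
  ultimately show thesis
    using that by blast
qed

lemma finite_integer_points_bounded:
  assumes "bounded S"
  shows "finite {z :: real^'n. (\<forall>i. z $ i \<in> \<int>) \<and> z \<in> S}"
proof -
  obtain K where K: "\<And>z. z \<in> S \<Longrightarrow> norm z \<le> K"
    using assms bounded_iff by blast
  define N where "N = \<lceil>K\<rceil>"
  have "{z :: real^'n. (\<forall>i. z $ i \<in> \<int>) \<and> z \<in> S}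
      \<subseteq> (\<lambda>t. \<chi> i. of_int (t i)) ` PiE UNIV (\<lambda>_. {-N..N})"
  proof
    fix z :: "real^'n"
    assume z: "z \<in> {z. (\<forall>i. z $ i \<in> \<int>) \<and> z \<in> S}"
    define t where "t i = \<lfloor>z $ i\<rfloor>" for i
    have zt: "z $ i = of_int (t i)" for i
      using z by (auto simp: t_def elim!: Ints_cases)
    have "norm z \<le> K"
      using K z by blast
    then have "\<bar>z $ i\<bar> \<le> real_of_int N" for i
      using component_le_norm_cart [of z i] le_of_int_ceiling [of K] unfolding N_def by linarith
    then have "\<bar>t i\<bar> \<le> N" for i
      unfolding zt by (metis of_int_abs of_int_le_iff)
    then have "t \<in> PiE UNIV (\<lambda>_. {-N..N})"
      by (simp add: PiE_iff abs_le_iff minus_le_iff)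
    moreover have "z = (\<chi> i. of_int (t i))"
      by (simp add: vec_eq_iff zt)
    ultimately show "z \<in> (\<lambda>t. \<chi> i. of_int (t i)) ` PiE UNIV (\<lambda>_. {-N..N})"
      by blast
  qed
  then show ?thesis
    by (rule finite_subset) (intro finite_imageI finite_PiE; simp)
qed

lemma finite_lattice_of_Int_bounded:
  fixes M :: "real^'n^'n"
  assumes "invertible M" "bounded S"
  shows "finite (lattice_of M \<inter> S)"
proof -
  obtain M' where M': "M' ** M = mat 1"
    using assms(1) invertible_def by blast
  let ?Z = "{z :: real^'n. (\<forall>i. z $ i \<in> \<int>) \<and> z \<in> (*v) M' ` S}"
  have "lattice_of M \<inter> S \<subseteq> (*v) M ` ?Z"
  proof
    fix x
    assume "x \<in> lattice_of M \<inter> S"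
    then obtain z where "x = M *v z" "\<forall>i. z $ i \<in> \<int>" "x \<in> S"
      by (auto simp: lattice_of_def)
    moreover have "M' *v x = z"
      using M' by (simp add: \<open>x = M *v z\<close> matrix_vector_mul_assoc)
    ultimately have "z \<in> ?Z"
      by (auto intro: rev_image_eqI)
    then show "x \<in> (*v) M ` ?Z"
      using \<open>x = M *v z\<close> by blast
  qed
  moreover have "finite ?Z"
    using assms(2) by (intro finite_integer_points_bounded bounded_linear_image) auto
  ultimately show ?thesis
    using finite_subset by blast
qed

definition unit_cube :: "(real^'n) set" where
  "unit_cube = {u. \<forall>i. 0 \<le> u $ i \<and> u $ i < 1}"

lemma unit_cube_between_boxes: "box 0 1 \<subseteq> unit_cube" "unit_cube \<subseteq> cbox 0 1"
  by (auto simp: unit_cube_def mem_box_cart less_imp_le)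

lemma
  shows lmeasurable_unit_cube: "(unit_cube :: (real^'n) set) \<in> lmeasurable"
    and measure_unit_cube: "measure lebesgue (unit_cube :: (real^'n) set) = 1"
proof -
  have neg: "negligible (cbox 0 1 - unit_cube \<union> (unit_cube - cbox 0 (1::real^'n)))"
    using unit_cube_between_boxes
    by (intro negligible_subset [OF negligible_frontier_interval [of 0 1]]) auto
  show "(unit_cube :: (real^'n) set) \<in> lmeasurable"
    by (rule lmeasurable_negligible_symdiff [OF lmeasurable_cbox neg])
  have "measure lebesgue (unit_cube :: (real^'n) set) = measure lebesgue (cbox 0 (1::real^'n))"
    by (rule measure_negligible_symdiff [OF lmeasurable_cbox neg])
  then show "measure lebesgue (unit_cube :: (real^'n) set) = 1"
    by (simp add: content_cbox_cart interval_ne_empty_cart)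
qed

lemma bounded_unit_cube: "bounded unit_cube"
  using bounded_cbox bounded_subset unit_cube_between_boxes(2) by blast

lemma lattice_of_plus_unit_cube_cover:
  fixes M :: "real^'n^'n"
  assumes "invertible M"
  obtains l u where "l \<in> lattice_of M" "u \<in> unit_cube" "x = l + M *v u"
proof -
  obtain M' where M': "M ** M' = mat 1"
    using assms invertible_def by blast
  define z :: "real^'n" where "z = (\<chi> i. of_int \<lfloor>(M' *v x) $ i\<rfloor>)"
  have "M *v z \<in> lattice_of M"
    by (auto simp: lattice_of_def z_def)
  moreover have "M' *v x - z \<in> unit_cube"
    by (simp add: unit_cube_def z_def frac_lt_1 flip: frac_def)
  moreover have "x = M *v z + M *v (M' *v x - z)"
    by (simp add: matrix_vector_mult_diff_distrib matrix_vector_mul_assoc M')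
  ultimately show thesis
    using that by blast
qed

lemma lattice_of_plus_unit_cube_unique:
  fixes M :: "real^'n^'n"
  assumes "invertible M" "l \<in> lattice_of M" "l' \<in> lattice_of M" "u \<in> unit_cube" "u' \<in> unit_cube"
    and "l + M *v u = l' + M *v u'"
  shows "l = l'"
proof -
  obtain z z' where z: "l = M *v z" "l' = M *v z'" "\<forall>i. z $ i \<in> \<int>" "\<forall>i. z' $ i \<in> \<int>"
    using assms(2,3) by (auto simp: lattice_of_def)
  obtain M' where "M' ** M = mat 1"
    using assms(1) invertible_def by blast
  then have "M' *v (M *v (z + u)) = M' *v (M *v (z' + u'))"
    using assms(6) by (simp add: z matrix_vector_right_distrib)
  then have sum_eq: "z + u = z' + u'"
    by (simp add: matrix_vector_mul_assoc \<open>M' ** M = mat 1\<close>)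
  have "z $ i = z' $ i" for i
  proof -
    obtain a b where "z $ i = of_int a" "z' $ i = of_int b"
      using z(3,4) Ints_cases by metis
    moreover have "\<lfloor>of_int a + u $ i\<rfloor> = a" "\<lfloor>of_int b + u' $ i\<rfloor> = b"
      using assms(4,5) by (auto simp: unit_cube_def intro!: floor_unique)
    ultimately show ?thesis
      using sum_eq by (metis vector_add_component)
  qed
  then have "z = z'"
    by (simp add: vec_eq_iff)
  then show ?thesis
    by (simp add: z)
qed

lemma
  fixes M :: "real^'n^'n"
  assumes "invertible M"
  shows covering_radius_nonneg: "0 \<le> covering_radius (lattice_of M)"
    and exists_lattice_point_within_covering_radius: "e > 0 \<Longrightarrow> \<exists>l \<in> lattice_of M. norm (x - l) < covering_radius (lattice_of M) + e"
proof -
  define d where "d x = (INF l \<in> lattice_of M. norm (x - l))" for x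
  have "0 \<in> lattice_of M"
    by (auto simp: lattice_of_def intro: exI [of _ 0])
  then have nonempty: "lattice_of M \<noteq> {}"
    by blast
  have below: "bdd_below ((\<lambda>l. norm (x - l)) ` lattice_of M)" for x
    by (rule bdd_belowI [of _ 0]) auto
  have "bounded ((*v) M ` unit_cube)"
    by (intro bounded_linear_image bounded_unit_cube) simp
  then obtain K where K: "\<And>u. u \<in> unit_cube \<Longrightarrow> norm (M *v u) \<le> K"
    unfolding bounded_iff by blast
  have "d x \<le> K" for x
  proof -
    obtain l u where "l \<in> lattice_of M" "u \<in> unit_cube" "x = l + M *v u"
      using lattice_of_plus_unit_cube_cover [OF assms] by blast
    then have "d x \<le> norm (M *v u)"
      unfolding d_def by (metis cINF_lower [OF below] add_diff_cancel_left')
    then show ?thesis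
      using K \<open>u \<in> unit_cube\<close> by (meson order_trans)
  qed
  then have "d x \<le> covering_radius (lattice_of M)" for x
    unfolding covering_radius_def d_def by (intro cSUP_upper bdd_aboveI) auto
  moreover have "0 \<le> d x" for x
    unfolding d_def using nonempty by (intro cINF_greatest) auto
  ultimately show "0 \<le> covering_radius (lattice_of M)"
    by (meson order_trans)
  assume "e > 0"
  with \<open>d x \<le> covering_radius (lattice_of M)\<close> have "d x < covering_radius (lattice_of M) + e"
    by linarith
  then show "\<exists>l \<in> lattice_of M. norm (x - l) < covering_radius (lattice_of M) + e"
    unfolding d_def using cINF_less_iff [OF nonempty below] by blast
qed

definition thickening :: "'a::metric_space set \<Rightarrow> real \<Rightarrow> 'a set" where
  "thickening A r = (\<Union>a\<in>A. cball a r)"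

lemma compact_thickening:
  fixes A :: "'a::heine_borel set"
  shows "finite A \<Longrightarrow> compact (thickening A r)"
  unfolding thickening_def using compact_cball by (intro compact_UN) auto

lemma lmeasurable_thickening:
  fixes A :: "'a::euclidean_space set"
  shows "finite A \<Longrightarrow> thickening A r \<in> lmeasurable"
  by (simp add: compact_thickening lmeasurable_compact)

lemma sum_measure_lattice_translates_le:
  fixes M :: "real^'n^'n"
  assumes "invertible M" "finite S" "S \<subseteq> lattice_of M" "U \<in> lmeasurable"
  shows "(\<Sum>l\<in>S. measure lebesgue {y \<in> (*v) M ` unit_cube. y + l \<in> U}) \<le> measure lebesgue U"
proof -
  define T where "T l = U \<inter> (+) l ` (*v) M ` unit_cube" for l
  have T: "T l \<in> lmeasurable" for l
    unfolding T_def using assms(4)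
    by (intro fmeasurable.Int measurable_translation lmeasurable_matrix_image lmeasurable_unit_cube)
  have "{y \<in> (*v) M ` unit_cube. y + l \<in> U} = (\<lambda>x. x - l) ` T l" for l
    by (force simp: T_def add.commute)
  then have "(\<Sum>l\<in>S. measure lebesgue {y \<in> (*v) M ` unit_cube. y + l \<in> U}) = (\<Sum>l\<in>S. measure lebesgue (T l))"
    by (simp add: measure_translation_subtract)
  also have "\<dots> = measure lebesgue (\<Union>l\<in>S. T l)"
  proof (rule measure_finite_Union [symmetric, OF assms(2)])
    show "disjoint_family_on T S"
      unfolding disjoint_family_on_def T_def
      using assms(3) lattice_of_plus_unit_cube_unique [OF assms(1)] by blast
    show "T ` S \<subseteq> sets lebesgue"
      using T by (simp add: fmeasurableD image_subset_iff)
    show "emeasure lebesgue (T l) \<noteq> \<infinity>" for l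
      using fmeasurableD2 [OF T, of l] by simp
  qed
  also have "\<dots> \<le> measure lebesgue U"
  proof (rule measure_mono_fmeasurable [OF _ _ assms(4)])
    show "(\<Union>l\<in>S. T l) \<subseteq> U"
      by (auto simp: T_def)
    show "(\<Union>l\<in>S. T l) \<in> sets lebesgue"
      using T assms(2) by (intro sets.finite_UN fmeasurableD) auto
  qed
  finally show ?thesis .
qed

lemma card_le_card_lattice_shifts_into_thickening:
  assumes "finite S" "A \<subseteq> lattice_of M" "m \<in> lattice_of M" "norm (y - m) \<le> r"
    and "\<And>l. l \<in> lattice_of M \<Longrightarrow> y + l \<in> thickening A r \<Longrightarrow> l \<in> S"
  shows "card A \<le> card {l \<in> S. y + l \<in> thickening A r}"
proof -
  have "(\<lambda>a. a - m) ` A \<subseteq> {l \<in> S. y + l \<in> thickening A r}"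
  proof
    fix l
    assume "l \<in> (\<lambda>a. a - m) ` A"
    then obtain a where "a \<in> A" "l = a - m"
      by blast
    have "dist a (y + l) \<le> r"
      using assms(4) by (simp add: \<open>l = a - m\<close> dist_norm norm_minus_commute)
    then have "y + l \<in> thickening A r"
      using \<open>a \<in> A\<close> by (auto simp: thickening_def)
    moreover have "l \<in> lattice_of M"
      using assms(2,3) \<open>a \<in> A\<close> \<open>l = a - m\<close> lattice_of_diff by blast
    ultimately show "l \<in> {l \<in> S. y + l \<in> thickening A r}"
      using assms(5) by blast
  qed
  then have "card ((\<lambda>a. a - m) ` A) \<le> card {l \<in> S. y + l \<in> thickening A r}"
    using assms(1) by (intro card_mono) auto
  then show ?thesis
    by (simp add: card_image inj_on_def)
qed

lemma card_mult_det_le_measure_thickening: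
  fixes M :: "real^'n^'n"
  assumes "invertible M" and near: "\<And>x. \<exists>l \<in> lattice_of M. norm (x - l) \<le> r"
    and "finite A" "A \<subseteq> lattice_of M"
  shows "real (card A) * \<bar>det M\<bar> \<le> measure lebesgue (thickening A r)"
proof -
  define U where "U = thickening A r"
  define F where "F = (*v) M ` unit_cube"
  define W where "W l = {y \<in> F. y + l \<in> U}" for l
  define S where "S = lattice_of M \<inter> (\<Union>u\<in>U. \<Union>y\<in>F. {u - y})"
  have U: "U \<in> lmeasurable" "bounded U"
    unfolding U_def using \<open>finite A\<close> by (auto simp: lmeasurable_thickening compact_thickening compact_imp_bounded)
  have F: "F \<in> lmeasurable" "measure lebesgue F = \<bar>det M\<bar>" "bounded F"
    unfolding F_def
    by (auto simp: lmeasurable_matrix_image measure_matrix_image lmeasurable_unit_cube measure_unit_cube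
        intro: bounded_linear_image bounded_unit_cube)
  have "finite S"
    unfolding S_def using U(2) F(3)
    by (intro finite_lattice_of_Int_bounded assms(1) bounded_differences)
  have W: "W l \<in> lmeasurable" for l
  proof -
    have "W l = (\<lambda>x. x - l) ` (U \<inter> (+) l ` F)"
      by (force simp: W_def add.commute)
    then show ?thesis
      using U(1) F(1) by (simp add: measurable_translation_subtract fmeasurable.Int measurable_translation)
  qed
  have count: "real (card A) \<le> (\<Sum>l\<in>S. indicator (W l) y)" if "y \<in> F" for y
  proof -
    obtain m where "m \<in> lattice_of M" "norm (y - m) \<le> r"
      using near by blast
    moreover have "l \<in> S" if "l \<in> lattice_of M" "y + l \<in> U" for l
    proof -
      have "l = (y + l) - y"
        by simp
      then show ?thesis
        using that \<open>y \<in> F\<close> unfolding S_def by blast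
    qed
    ultimately have "card A \<le> card {l \<in> S. y + l \<in> U}"
      unfolding U_def using \<open>finite S\<close> assms(4)
      by (intro card_le_card_lattice_shifts_into_thickening)
    also have "real \<dots> = (\<Sum>l\<in>S. indicator (W l) y)"
      using \<open>finite S\<close> \<open>y \<in> F\<close> by (simp add: indicator_def sum.If_cases Int_def W_def)
    finally show ?thesis
      by simp
  qed
  have pointwise: "real (card A) * indicator F y \<le> (\<Sum>l\<in>S. indicator (W l) y)" for y
    using count by (cases "y \<in> F") (simp_all add: sum_nonneg)
  have "((\<lambda>y. real (card A) * indicator F y) has_integral real (card A) * measure lebesgue F) UNIV"
    using F(1) by (intro has_integral_mult_right) (simp add: lmeasurable_iff_has_integral [symmetric])
  moreover have "((\<lambda>y. \<Sum>l\<in>S. indicator (W l) y) has_integral (\<Sum>l\<in>S. measure lebesgue (W l))) UNIV"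
    using W by (intro has_integral_sum \<open>finite S\<close>) (simp add: lmeasurable_iff_has_integral [symmetric])
  ultimately have "real (card A) * measure lebesgue F \<le> (\<Sum>l\<in>S. measure lebesgue (W l))"
    by (rule has_integral_le) (use pointwise in auto)
  also have "\<dots> \<le> measure lebesgue U"
    unfolding W_def F_def using \<open>finite S\<close> U(1)
    by (intro sum_measure_lattice_translates_le assms(1)) (auto simp: S_def)
  finally show ?thesis
    by (simp add: F(2) U_def)
qed

lemma orthonormal_set_adapted_to_subspace:
  fixes H :: "(real^'n) set"
  assumes "subspace H"
  obtains C D where "C \<subseteq> H" "card C = dim H" "finite (C \<union> D)" "card (C \<union> D) = CARD('n)"
    "C \<inter> D = {}" "pairwise orthogonal (C \<union> D)" "\<And>x. x \<in> C \<union> D \<Longrightarrow> norm x = 1"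
    "\<And>x h. x \<in> D \<Longrightarrow> h \<in> H \<Longrightarrow> orthogonal h x"
proof -
  define H' where "H' = {y. \<forall>x\<in>H. orthogonal x y}"
  have "subspace H'"
    unfolding H'_def by (rule subspace_orthogonal_to_vectors)
  have "dim H' + dim H = CARD('n)"
    using dim_subspace_orthogonal_to_vectors [OF assms subspace_UNIV] by (simp add: H'_def)
  obtain C where C: "C \<subseteq> H" "pairwise orthogonal C" "\<And>x. x \<in> C \<Longrightarrow> norm x = 1"
      "independent C" "card C = dim H"
    using orthonormal_basis_subspace [OF assms] by metis
  obtain D where D: "D \<subseteq> H'" "pairwise orthogonal D" "\<And>x. x \<in> D \<Longrightarrow> norm x = 1"
      "independent D" "card D = dim H'"
    using orthonormal_basis_subspace [OF \<open>subspace H'\<close>] by metis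
  have CD: "orthogonal x y" if "x \<in> C" "y \<in> D" for x y
    using that C(1) D(1) by (auto simp: H'_def)
  have fin: "finite C" "finite D"
    using C(4) D(4) by (simp_all add: finiteI_independent)
  have disj: "C \<inter> D = {}"
    using CD C(3) by (fastforce simp: orthogonal_def)
  have "pairwise orthogonal (C \<union> D)"
    using C(2) D(2) CD orthogonal_commute unfolding pairwise_def by blast
  moreover have "card (C \<union> D) = CARD('n)"
    using fin disj C(5) D(5) \<open>dim H' + dim H = CARD('n)\<close> by (simp add: card_Un_disjoint)
  ultimately show thesis
    using C D fin disj by (intro that [of C D]) (auto simp: H'_def)
qed

lemma orthonormal_basis_adapted_to_subspace:
  fixes H :: "(real^'n) set"
  assumes "subspace H"
  obtains b :: "'n \<Rightarrow> real^'n" and I where "card I = dim H" "\<And>i. norm (b i) = 1"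
    "\<And>i j. i \<noteq> j \<Longrightarrow> orthogonal (b i) (b j)" "\<And>i. i \<in> I \<Longrightarrow> b i \<in> H"
    "\<And>i h. i \<notin> I \<Longrightarrow> h \<in> H \<Longrightarrow> orthogonal h (b i)"
proof -
  obtain C D where CD: "C \<subseteq> H" "card C = dim H" "finite (C \<union> D)" "card (C \<union> D) = CARD('n)"
    "C \<inter> D = {}" "pairwise orthogonal (C \<union> D)" "\<And>x. x \<in> C \<union> D \<Longrightarrow> norm x = 1"
    "\<And>x h. x \<in> D \<Longrightarrow> h \<in> H \<Longrightarrow> orthogonal h x"
    using orthonormal_set_adapted_to_subspace [OF assms] by blast
  obtain b where b: "bij_betw b (UNIV :: 'n set) (C \<union> D)"
    using finite_same_card_bij [of "UNIV :: 'n set" "C \<union> D"] CD(3,4) by auto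
  show thesis
  proof
    have "bij_betw b {i. b i \<in> C} C"
      using b by (auto simp: bij_betw_def inj_on_def)
    then show "card {i. b i \<in> C} = dim H"
      using CD(2) by (simp add: bij_betw_same_card)
    show "norm (b i) = 1" for i
      using b CD(7) by (auto simp: bij_betw_def)
    show "orthogonal (b i) (b j)" if "i \<noteq> j" for i j
      using b CD(6) that unfolding bij_betw_def inj_on_def pairwise_def by blast
    show "b i \<in> H" if "i \<in> {i. b i \<in> C}" for i
      using that CD(1) by blast
    show "orthogonal h (b i)" if "i \<notin> {i. b i \<in> C}" "h \<in> H" for i h
      using that b CD(8) by (auto simp: bij_betw_def)
  qed
qed

lemma sum_abs_le_sqrt_card_mult_norm:
  fixes b :: "real^'n"
  shows "(\<Sum>j\<in>UNIV. \<bar>b $ j\<bar>) \<le> sqrt CARD('n) * norm b"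
proof -
  define s :: "real^'n" where "s = (\<chi> j. sgn (b $ j))"
  have "norm s \<le> sqrt CARD('n)"
  proof -
    have "s \<bullet> s \<le> (\<Sum>j\<in>(UNIV::'n set). 1)"
      unfolding s_def inner_vec_def by (intro sum_mono) (simp add: sgn_if)
    then show ?thesis
      by (simp add: norm_eq_sqrt_inner)
  qed
  have "(\<Sum>j\<in>UNIV. \<bar>b $ j\<bar>) = s \<bullet> b"
    by (simp add: s_def inner_vec_def abs_sgn mult.commute)
  also have "\<dots> \<le> norm s * norm b"
    by (rule norm_cauchy_schwarz)
  also have "\<dots> \<le> sqrt CARD('n) * norm b"
    using \<open>norm s \<le> sqrt CARD('n)\<close> by (simp add: mult_right_mono)
  finally show ?thesis .
qed

lemma abs_inner_le_sum_abs_mult: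
  fixes b x :: "real^'n"
  assumes "\<And>j. \<bar>x $ j\<bar> \<le> t"
  shows "\<bar>b \<bullet> x\<bar> \<le> (\<Sum>j\<in>UNIV. \<bar>b $ j\<bar>) * t"
proof -
  have "\<bar>b \<bullet> x\<bar> \<le> (\<Sum>j\<in>UNIV. \<bar>b $ j * x $ j\<bar>)"
    unfolding inner_vec_def by (simp add: sum_abs)
  also have "\<dots> \<le> (\<Sum>j\<in>UNIV. \<bar>b $ j\<bar> * t)"
    using assms by (intro sum_mono) (simp add: abs_mult mult_left_mono)
  finally show ?thesis
    by (simp add: sum_distrib_right)
qed

lemma abs_inner_sub_cube_centre_le:
  fixes a b :: "real^'n"
  assumes "\<And>j. 0 \<le> a $ j \<and> a $ j \<le> B"
  shows "\<bar>b \<bullet> a - b \<bullet> (\<chi> j. B / 2)\<bar> \<le> (\<Sum>j\<in>UNIV. \<bar>b $ j\<bar>) * (B / 2)"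
proof -
  have "\<bar>(a - (\<chi> j. B / 2)) $ j\<bar> \<le> B / 2" for j
    using assms [of j] unfolding abs_le_iff by simp
  then show ?thesis
    unfolding inner_diff_right [symmetric] by (rule abs_inner_le_sum_abs_mult)
qed

lemma prod_box_widths_le:
  fixes I :: "'n::finite set" and c :: "'n \<Rightarrow> real"
  assumes "card I = k" "\<And>i. 0 \<le> c i" "\<And>i. c i \<le> sqrt CARD('n)" "0 \<le> B" "0 \<le> r"
  shows "(\<Prod>i\<in>UNIV. if i \<in> I then B * c i + 2 * r else 2 * r)
       \<le> (sqrt CARD('n) * (B + 2 * r)) ^ k * (2 * r) ^ (CARD('n) - k)"
proof -
  have "(\<Prod>i\<in>UNIV. if i \<in> I then B * c i + 2 * r else 2 * r)
      = (\<Prod>i\<in>I. B * c i + 2 * r) * (2 * r) ^ (CARD('n) - k)"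
  proof -
    have "card (UNIV \<inter> - {i. i \<in> I}) = CARD('n) - k"
      using assms(1) by (simp add: Compl_eq_Diff_UNIV card_Diff_subset)
    then show ?thesis
      by (simp add: prod.If_cases)
  qed
  also have "\<dots> \<le> (\<Prod>i\<in>I. sqrt CARD('n) * (B + 2 * r)) * (2 * r) ^ (CARD('n) - k)"
  proof (intro mult_right_mono prod_mono conjI)
    fix i
    have "B * c i \<le> sqrt CARD('n) * B" "2 * r \<le> sqrt CARD('n) * (2 * r)"
      using assms(3-5) mult_right_mono [of 1 "sqrt CARD('n)" "2 * r"]
      by (auto simp: mult.commute intro: mult_left_mono)
    then show "B * c i + 2 * r \<le> sqrt CARD('n) * (B + 2 * r)"
      by (simp add: algebra_simps)
  qed (use assms in auto)
  finally show ?thesis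
    using assms(1) by simp
qed

lemma measure_thickening_subspace_cube_le:
  fixes H :: "(real^'n) set"
  assumes "subspace H" "finite A" "A \<subseteq> H \<inter> {x. \<forall>i. 0 \<le> x $ i \<and> x $ i < B}" "0 \<le> B" "0 \<le> r"
  shows "measure lebesgue (thickening A r)
       \<le> (sqrt CARD('n) * (B + 2 * r)) ^ dim H * (2 * r) ^ (CARD('n) - dim H)"
proof -
  obtain b :: "'n \<Rightarrow> real^'n" and I where b: "card I = dim H" "\<And>i. norm (b i) = 1"
    "\<And>i j. i \<noteq> j \<Longrightarrow> orthogonal (b i) (b j)" "\<And>i. i \<in> I \<Longrightarrow> b i \<in> H"
    "\<And>i h. i \<notin> I \<Longrightarrow> h \<in> H \<Longrightarrow> orthogonal h (b i)"
    using orthonormal_basis_adapted_to_subspace [OF assms(1)] by metis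
  define R :: "real^'n^'n" where "R = (\<chi> i. b i)"
  define c where "c i = (\<Sum>j\<in>UNIV. \<bar>b i $ j\<bar>)" for i
  define m :: "real^'n" where "m = (\<chi> i. if i \<in> I then b i \<bullet> (\<chi> j. B / 2) else 0)"
  define w :: "real^'n" where "w = (\<chi> i. if i \<in> I then c i * (B / 2) + r else r)"
  have "(*v) R ` thickening A r \<subseteq> cbox (m - w) (m + w)"
  proof (rule image_subsetI)
    fix x
    assume "x \<in> thickening A r"
    then obtain a where a: "a \<in> A" "norm (x - a) \<le> r"
      by (auto simp: thickening_def dist_norm norm_minus_commute)
    have "\<bar>(R *v x) $ i - m $ i\<bar> \<le> w $ i" for i
    proof -
      have "(R *v x) $ i = b i \<bullet> a + b i \<bullet> (x - a)"
        by (simp add: R_def matrix_vector_mul_component flip: inner_add_right)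
      moreover have "\<bar>b i \<bullet> (x - a)\<bar> \<le> r"
        using Cauchy_Schwarz_ineq2 [of "b i" "x - a"] b(2) a(2) by simp
      moreover have "\<bar>b i \<bullet> a - m $ i\<bar> \<le> (if i \<in> I then c i * (B / 2) else 0)"
        using a(1) assms(3) b(5) abs_inner_sub_cube_centre_le [of a B "b i"]
        by (auto simp: m_def c_def orthogonal_def inner_commute less_imp_le)
      ultimately show ?thesis
        by (auto simp: w_def abs_le_iff split: if_splits)
    qed
    then show "R *v x \<in> cbox (m - w) (m + w)"
      by (simp add: mem_box_cart abs_le_iff algebra_simps)
  qed
  then have "measure lebesgue ((*v) R ` thickening A r) \<le> measure lebesgue (cbox (m - w) (m + w))"
    by (intro measure_mono_fmeasurable lmeasurable_cbox fmeasurableD lmeasurable_matrix_image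
        lmeasurable_thickening assms(2))
  moreover have "orthogonal_matrix R"
    using b(2,3) by (simp add: orthogonal_matrix_orthonormal_rows R_def row_def vec_lambda_eta)
  ultimately have "measure lebesgue (thickening A r) \<le> measure lebesgue (cbox (m - w) (m + w))"
    using assms(2) by (simp add: measure_orthogonal_matrix_image lmeasurable_thickening)
  also have "\<dots> = (\<Prod>i\<in>UNIV. 2 * w $ i)"
  proof (rule measure_cbox_centred)
    have "0 \<le> c i" for i
      by (simp add: c_def sum_nonneg)
    then show "0 \<le> w $ i" for i
      using assms(4,5) by (simp add: w_def)
  qed
  also have "\<dots> = (\<Prod>i\<in>UNIV. if i \<in> I then B * c i + 2 * r else 2 * r)"
    by (intro prod.cong) (auto simp: w_def)
  also have "\<dots> \<le> (sqrt CARD('n) * (B + 2 * r)) ^ dim H * (2 * r) ^ (CARD('n) - dim H)"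
    using b(1,2) assms(4,5) sum_abs_le_sqrt_card_mult_norm [of "b _"]
    by (intro prod_box_widths_le) (auto simp: c_def sum_nonneg)
  finally show ?thesis .
qed

lemma card_lattice_subspace_cube_mult_det_le:
  fixes M :: "real^'n^'n" and H :: "(real^'n) set"
  assumes "invertible M" "subspace H" "0 \<le> B" "covering_radius (lattice_of M) < r"
  shows "real (card (lattice_of M \<inter> H \<inter> {x. \<forall>i. 0 \<le> x $ i \<and> x $ i < B})) * \<bar>det M\<bar>
       \<le> (sqrt CARD('n) * (B + 2 * r)) ^ dim H * (2 * r) ^ (CARD('n) - dim H)"
proof -
  define A where "A = lattice_of M \<inter> H \<inter> {x. \<forall>i. 0 \<le> x $ i \<and> x $ i < B}"
  have "A \<subseteq> lattice_of M \<inter> cbox 0 (\<chi> i. B)"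
    by (auto simp: A_def mem_box_cart less_imp_le)
  then have "finite A"
    using finite_lattice_of_Int_bounded [OF assms(1) bounded_cbox] finite_subset by blast
  have "\<exists>l \<in> lattice_of M. norm (x - l) \<le> r" for x
    using exists_lattice_point_within_covering_radius [OF assms(1), of "r - covering_radius (lattice_of M)" x] assms(4)
    by (auto intro: less_imp_le)
  then have "real (card A) * \<bar>det M\<bar> \<le> measure lebesgue (thickening A r)"
    using \<open>finite A\<close> by (intro card_mult_det_le_measure_thickening assms(1)) (auto simp: A_def)
  also have "\<dots> \<le> (sqrt CARD('n) * (B + 2 * r)) ^ dim H * (2 * r) ^ (CARD('n) - dim H)"
    using \<open>finite A\<close> assms covering_radius_nonneg [OF assms(1)]
    by (intro measure_thickening_subspace_cube_le) (auto simp: A_def)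
  finally show ?thesis
    unfolding A_def .
qed

theorem lemma2p2:
  fixes L :: "(real^'n) set" and H :: "(real^'n) set" and B :: real and k :: nat
  assumes "full_rank_lattice L"
    and "B > 0"
    and "subspace H" and "dim H = k" and "1 \<le> k" and "k < CARD('n)"
  shows "real (card (L \<inter> H \<inter> {x. \<forall>i. 0 \<le> x $ i \<and> x $ i < B}))
    \<le> real CARD('n) powr (real k / 2) * (B + 2 * covering_radius L) ^ k
        * (2 * covering_radius L) ^ (CARD('n) - k) / lattice_det L"
proof -
  obtain M where M: "invertible M" "L = lattice_of M" "lattice_det L = \<bar>det M\<bar>"
    using full_rank_lattice_basis [OF assms(1)] by blast
  define \<nu> where "\<nu> = covering_radius L"
  define c where "c = real (card (L \<inter> H \<inter> {x. \<forall>i. 0 \<le> x $ i \<and> x $ i < B})) * \<bar>det M\<bar>"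
  define g where "g r = (sqrt CARD('n) * (B + 2 * r)) ^ k * (2 * r) ^ (CARD('n) - k)" for r
  have bound: "c \<le> g r" if "\<nu> < r" for r
    using card_lattice_subspace_cube_mult_det_le [OF M(1) assms(3)] that assms(2,4)
    unfolding c_def g_def \<nu>_def M(2) by simp
  have "(g \<longlongrightarrow> g \<nu>) (at_right \<nu>)"
    unfolding g_def by (intro tendsto_intros)
  moreover have "\<forall>\<^sub>F r in at_right \<nu>. c \<le> g r"
    using eventually_at_right_less by (rule eventually_mono) (rule bound)
  ultimately have "c \<le> g \<nu>"
    by (rule tendsto_lowerbound) simp
  moreover have "sqrt CARD('n) ^ k = real CARD('n) powr (real k / 2)"
    by (simp add: powr_half_sqrt [symmetric] powr_realpow [symmetric] powr_powr)
  moreover have "\<bar>det M\<bar> > 0"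
    using M(1) invertible_det_nz by auto
  ultimately show ?thesis
    by (simp add: c_def g_def \<nu>_def M(3) pos_le_divide_eq power_mult_distrib)
qed

end
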